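(* With the notation of the context, $$\sum_{\lambda\in\mathcal{D}}(-1)^{n_\lambda}(m_\lambda+n_\lambda)q^{N_\lambda} =\sum_{r=1}^\infty(-1)^r\Big[(3r-1)q^{r(3r-1)/2}+3r\,q^{r(3r+1)/2}\Big]$$ as formal power series in $q$.
   Context: $\mathcal{D}$ denotes the set of all partitions into distinct parts (of all nonnegative integers, including the empty partition of $0$). For $\lambda\in\mathcal{D}$, $N_\lambda$ is the integer partitioned by $\lambda$, $n_\lambda$ is the number of parts of $\lambda$, and $m_\lambda$ is the largest part of $\lambda$ (with $m_\lambda=0$ for the empty partition). *)

theory Defs
  imports "HOL-Computational_Algebra.Formal_Power_Series"
begin

text \<open>A partition into distinct parts is represented by its (finite) set of parts,
  all of which are positive integers. The empty set is the empty partition of 0.\<close>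

definition distinct_partition :: "nat set \<Rightarrow> bool" where
  "distinct_partition S \<longleftrightarrow> finite S \<and> 0 \<notin> S"

definition part_sum :: "nat set \<Rightarrow> nat" where
  "part_sum S = \<Sum>S"

definition num_parts :: "nat set \<Rightarrow> nat" where
  "num_parts S = card S"

definition largest_part :: "nat set \<Rightarrow> nat" where
  "largest_part S = (if S = {} then 0 else Max S)"

definition distinct_partitions_of :: "nat \<Rightarrow> nat set set" where
  "distinct_partitions_of N = {S. distinct_partition S \<and> part_sum S = N}"

end

theory Submission
  imports Defs "HOL-Library.Disjoint_Sets"
begin

(* Franklin's involution. Let a nonempty partition into distinct parts have n parts, largest
   part m, smallest part s (the base) and slope \<sigma>, the length of the maximal run m, m - 1, ...
   of consecutive parts. If s \<le> \<sigma>, delete the base and add 1 to each of the s largest parts;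
   otherwise subtract 1 from each of the \<sigma> largest parts and add \<sigma> as a new part. Both moves
   preserve the partitioned number, are inverse to each other, and change (n, m) to (n - 1, m + 1)
   or (n + 1, m - 1), so they preserve m + n and flip (-1)^n. This breaks down only when the base
   lies on the slope and s = \<sigma> or s = \<sigma> + 1, that is, for the pentagonal partitions
   {r, ..., 2r - 1} of r(3r - 1)/2 and {r + 1, ..., 2r} of r(3r + 1)/2. Their weights
   (-1)^r (3r - 1) and (-1)^r 3r make up the right-hand side; the empty partition has weight 0. *)

lemma sum_insert_Diff2:
  fixes S :: "'a::comm_monoid_add set"
  assumes "finite S" "a \<in> S" "b \<in> S" "a \<noteq> b" "c \<notin> S"
  shows "\<Sum>(insert c (S - {a, b})) + (a + b) = \<Sum>S + c"
proof -
  have "S = insert a (insert b (S - {a, b}))" using assms by auto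
  then have "\<Sum>S = a + (b + \<Sum>(S - {a, b}))"
    using assms by (metis Diff_iff finite_insert insertCI insertE sum.insert)
  then show ?thesis using assms by (simp add: ac_simps)
qed

lemma card_insert_Diff2:
  assumes "finite S" "a \<in> S" "b \<in> S" "a \<noteq> b" "c \<notin> S"
  shows "card (insert c (S - {a, b})) + 1 = card S"
proof -
  have "card {a, b} \<le> card S" using assms by (intro card_mono) auto
  then have "card (S - {a, b}) + 2 = card S"
    using assms by (simp add: card_Diff_subset)
  then show ?thesis using assms by simp
qed

lemma Min_pos:
  fixes S :: "nat set"
  assumes "finite S" and "S \<noteq> {}" and "0 \<notin> S"
  shows "0 < Min S"
  using Min_in[OF assms(1,2)] assms(3) by (cases "Min S") auto

lemma Max_add_1_notin: "finite S \<Longrightarrow> Max S + 1 \<notin> S" for S :: "nat set"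
  by (auto dest: Max_ge)

lemma double_sum_atLeastLessThan: "2 * \<Sum>{k..<k + r} + r = r * (2 * k + r)" for k r :: nat
  by (induction r) (auto simp: algebra_simps)

definition slope :: "nat set \<Rightarrow> nat" where
  "slope S = (LEAST j. Max S - j \<notin> S)"

lemma slope_eqI:
  assumes "\<And>j. j < k \<Longrightarrow> Max S - j \<in> S" and "Max S - k \<notin> S"
  shows "slope S = k"
  unfolding slope_def
  by (rule Least_equality) (use assms in \<open>auto simp: not_le[symmetric]\<close>)

lemma slope_run: "j < slope S \<Longrightarrow> Max S - j \<in> S"
  unfolding slope_def using not_less_Least by blast

lemma
  assumes "finite S" and "S \<noteq> {}" and "0 \<notin> S"
  shows slope_run_end: "Max S - slope S \<notin> S"
    and slope_pos: "0 < slope S"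
    and Min_add_slope_le: "Min S + slope S \<le> Max S + 1"
proof -
  have "Max S - Max S \<notin> S" using assms by simp
  then show end_notin: "Max S - slope S \<notin> S" unfolding slope_def by (rule LeastI)
  have "slope S \<le> Max S" unfolding slope_def using \<open>Max S - Max S \<notin> S\<close> by (rule Least_le)
  have "Max S \<in> S" using assms by simp
  with end_notin show "0 < slope S" by (metis diff_zero gr0I)
  then have "Max S - (slope S - 1) \<in> S" by (intro slope_run) simp
  then have "Min S \<le> Max S - (slope S - 1)" using assms by simp
  with \<open>slope S \<le> Max S\<close> show "Min S + slope S \<le> Max S + 1" by linarith
qed

(* On sets: adding 1 to the s largest parts m, ..., m + 1 - s only replaces m + 1 - s by m + 1,
   and subtracting 1 from the \<sigma> largest parts only replaces m by m - \<sigma>. *)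
definition base_to_slope :: "nat set \<Rightarrow> nat set" where
  "base_to_slope S = insert (Max S + 1) (S - {Min S, Max S + 1 - Min S})"

definition slope_to_base :: "nat set \<Rightarrow> nat set" where
  "slope_to_base S = insert (slope S) (insert (Max S - slope S) (S - {Max S}))"

definition franklin :: "nat set \<Rightarrow> nat set" where
  "franklin S = (if Min S \<le> slope S then base_to_slope S else slope_to_base S)"

definition franklin_exceptional :: "nat set \<Rightarrow> bool" where
  "franklin_exceptional S \<longleftrightarrow>
     Max S + 1 = Min S + slope S \<and> (Min S = slope S \<or> Min S = slope S + 1)"

lemma not_franklin_exceptional_iff:
  assumes "finite S" and "S \<noteq> {}" and "0 \<notin> S"
  shows "\<not> franklin_exceptional S \<longleftrightarrow>
           Min S \<le> slope S \<and> 2 * Min S \<le> Max S \<or> slope S < Min S \<and> 2 * slope S < Max S"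
  using Min_add_slope_le[OF assms] unfolding franklin_exceptional_def by linarith

lemma mem_base_to_slope:
  "x \<in> base_to_slope S \<longleftrightarrow> x = Max S + 1 \<or> x \<in> S \<and> x \<noteq> Min S \<and> x \<noteq> Max S + 1 - Min S"
  by (auto simp: base_to_slope_def)

lemma mem_slope_to_base:
  "x \<in> slope_to_base S \<longleftrightarrow> x = slope S \<or> x = Max S - slope S \<or> x \<in> S \<and> x \<noteq> Max S"
  by (auto simp: slope_to_base_def)

lemma finite_base_to_slope: "finite S \<Longrightarrow> finite (base_to_slope S)"
  by (simp add: base_to_slope_def)

lemma finite_slope_to_base: "finite S \<Longrightarrow> finite (slope_to_base S)"
  by (simp add: slope_to_base_def)

lemma base_to_slope_nonempty: "base_to_slope S \<noteq> {}"
  by (simp add: base_to_slope_def)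

lemma slope_to_base_nonempty: "slope_to_base S \<noteq> {}"
  by (simp add: slope_to_base_def)

lemma zero_notin_base_to_slope: "0 \<notin> S \<Longrightarrow> 0 \<notin> base_to_slope S"
  by (simp add: mem_base_to_slope)

context
  fixes S :: "nat set"
  assumes fin: "finite S" and ne: "S \<noteq> {}" and pos: "0 \<notin> S"
    and base_le_slope: "Min S \<le> slope S" and short_base: "2 * Min S \<le> Max S"
begin

lemma Max_add_1_minus_Min_in: "Max S + 1 - Min S \<in> S"
proof -
  have "Min S - 1 < slope S" using Min_pos[OF fin ne pos] base_le_slope by linarith
  then have "Max S - (Min S - 1) \<in> S" by (rule slope_run)
  moreover have "Max S - (Min S - 1) = Max S + 1 - Min S" using Min_pos[OF fin ne pos] by arith
  ultimately show ?thesis by simp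
qed

lemma sum_base_to_slope: "\<Sum>(base_to_slope S) = \<Sum>S"
proof -
  have "Min S \<noteq> Max S + 1 - Min S" using short_base by linarith
  from sum_insert_Diff2[OF fin Min_in[OF fin ne] Max_add_1_minus_Min_in this Max_add_1_notin[OF fin]]
  show ?thesis using short_base by (simp add: base_to_slope_def)
qed

lemma card_base_to_slope: "card (base_to_slope S) + 1 = card S"
proof -
  have "Min S \<noteq> Max S + 1 - Min S" using short_base by linarith
  from card_insert_Diff2[OF fin Min_in[OF fin ne] Max_add_1_minus_Min_in this Max_add_1_notin[OF fin]]
  show ?thesis by (simp add: base_to_slope_def)
qed

lemma Max_base_to_slope: "Max (base_to_slope S) = Max S + 1"
  using fin by (intro Max_eqI) (auto simp: mem_base_to_slope finite_base_to_slope intro: le_SucI)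

lemma Min_less_Min_base_to_slope: "Min S < Min (base_to_slope S)"
proof -
  have "Min S < x" if "x \<in> base_to_slope S" for x
    using that fin short_base by (auto simp: mem_base_to_slope le_neq_implies_less)
  then show ?thesis
    using fin by (simp add: finite_base_to_slope base_to_slope_nonempty)
qed

lemma slope_base_to_slope: "slope (base_to_slope S) = Min S"
proof (rule slope_eqI)
  fix j assume "j < Min S"
  show "Max (base_to_slope S) - j \<in> base_to_slope S"
  proof (cases "j = 0")
    case False
    have "Max (base_to_slope S) - j = Max S - (j - 1)" using False by (simp add: Max_base_to_slope)
    moreover have "Max S - (j - 1) \<in> S" using slope_run \<open>j < Min S\<close> base_le_slope by simp
    moreover have "Max S - (j - 1) \<noteq> Min S" "Max S - (j - 1) \<noteq> Max S + 1 - Min S"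
      using False \<open>j < Min S\<close> short_base by linarith+
    ultimately show ?thesis by (simp add: mem_base_to_slope)
  qed (simp add: mem_base_to_slope Max_base_to_slope)
qed (use Min_pos[OF fin ne pos] in \<open>auto simp: mem_base_to_slope Max_base_to_slope\<close>)

lemma slope_to_base_base_to_slope: "slope_to_base (base_to_slope S) = S"
proof -
  have "base_to_slope S - {Max S + 1} = S - {Min S, Max S + 1 - Min S}"
    using Max_add_1_notin[OF fin] by (auto simp: base_to_slope_def)
  then show ?thesis
    using Min_in[OF fin ne] Max_add_1_minus_Min_in
    unfolding slope_to_base_def slope_base_to_slope Max_base_to_slope by auto
qed

end

context
  fixes S :: "nat set"
  assumes fin: "finite S" and ne: "S \<noteq> {}" and pos: "0 \<notin> S"
    and slope_less_base: "slope S < Min S" and short_slope: "2 * slope S < Max S"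
begin

lemma slope_notin: "slope S \<notin> S"
  using slope_less_base Min_le[OF fin] by (meson not_le)

lemma zero_notin_slope_to_base: "0 \<notin> slope_to_base S"
  using pos slope_pos[OF fin ne pos] short_slope by (auto simp: mem_slope_to_base)

lemma Max_slope_to_base: "Max (slope_to_base S) = Max S - 1"
proof (rule Max_eqI)
  show "x \<le> Max S - 1" if "x \<in> slope_to_base S" for x
    using that slope_pos[OF fin ne pos] short_slope
    by (auto simp: mem_slope_to_base dest: Max_ge[OF fin])
  show "Max S - 1 \<in> slope_to_base S"
  proof (cases "slope S = 1")
    case False
    then have "Max S - 1 \<in> S" using slope_run[of 1] slope_pos[OF fin ne pos] by simp
    moreover have "Max S - 1 \<noteq> Max S" using short_slope by simp
    ultimately show ?thesis by (simp add: mem_slope_to_base)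
  qed (simp add: mem_slope_to_base)
qed (simp add: fin finite_slope_to_base)

lemma Min_slope_to_base: "Min (slope_to_base S) = slope S"
proof (rule Min_eqI)
  show "slope S \<le> x" if "x \<in> slope_to_base S" for x
    using that slope_less_base short_slope by (auto simp: mem_slope_to_base dest: Min_le[OF fin])
qed (simp_all add: fin finite_slope_to_base mem_slope_to_base)

lemma slope_le_slope_slope_to_base: "slope S \<le> slope (slope_to_base S)"
proof (rule ccontr)
  define k where "k = slope (slope_to_base S) + 1"
  assume "\<not> slope S \<le> slope (slope_to_base S)"
  then have "k \<le> slope S" by (simp add: k_def)
  have "Max S - k \<in> slope_to_base S"
  proof (cases "k = slope S")
    case False
    then have "Max S - k \<in> S" using slope_run \<open>k \<le> slope S\<close> by simp
    moreover have "Max S - k \<noteq> Max S" using short_slope by (simp add: k_def)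
    ultimately show ?thesis by (simp add: mem_slope_to_base)
  qed (simp add: mem_slope_to_base)
  moreover have "Max (slope_to_base S) - slope (slope_to_base S) = Max S - k"
    by (simp add: Max_slope_to_base k_def)
  ultimately show False
    using slope_run_end[OF finite_slope_to_base[OF fin] slope_to_base_nonempty zero_notin_slope_to_base]
    by simp
qed

lemma base_to_slope_slope_to_base: "base_to_slope (slope_to_base S) = S"
proof -
  have "Max S - slope S \<notin> S" using slope_run_end[OF fin ne pos] .
  then have "slope_to_base S - {slope S, Max S - slope S} = S - {Max S}"
    using slope_notin by (auto simp: slope_to_base_def)
  moreover have "Max S - 1 + 1 = Max S" using short_slope by simp
  ultimately show ?thesis
    using Max_in[OF fin ne] short_slope
    unfolding base_to_slope_def Min_slope_to_base Max_slope_to_base by auto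
qed

end

lemma franklin_base_to_slope:
  assumes "finite S" and "S \<noteq> {}" and "0 \<notin> S" and "Min S \<le> slope S" and "2 * Min S \<le> Max S"
  shows "franklin S = base_to_slope S" and "franklin (base_to_slope S) = S"
    and "\<not> franklin_exceptional S" and "\<not> franklin_exceptional (base_to_slope S)"
proof -
  show "franklin S = base_to_slope S" using assms(4) by (simp add: franklin_def)
  have "slope (base_to_slope S) < Min (base_to_slope S)"
    using slope_base_to_slope[OF assms] Min_less_Min_base_to_slope[OF assms] by simp
  then show "franklin (base_to_slope S) = S"
    using slope_to_base_base_to_slope[OF assms] by (simp add: franklin_def)
  show "\<not> franklin_exceptional S" using not_franklin_exceptional_iff assms by simp
  have "2 * slope (base_to_slope S) < Max (base_to_slope S)"
    using slope_base_to_slope[OF assms] Max_base_to_slope[OF assms] assms(5) by simp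
  with \<open>slope (base_to_slope S) < Min (base_to_slope S)\<close>
  show "\<not> franklin_exceptional (base_to_slope S)"
    using not_franklin_exceptional_iff[OF finite_base_to_slope base_to_slope_nonempty
        zero_notin_base_to_slope] assms(1,3) by simp
qed

lemma not_franklin_exceptional_cases:
  assumes "finite S" and "S \<noteq> {}" and "0 \<notin> S" and "\<not> franklin_exceptional S"
  obtains A where "finite A" and "A \<noteq> {}" and "0 \<notin> A" and "Min A \<le> slope A"
    and "2 * Min A \<le> Max A" and "S = A \<or> S = base_to_slope A"
proof -
  consider "Min S \<le> slope S \<and> 2 * Min S \<le> Max S" | "slope S < Min S \<and> 2 * slope S < Max S"
    using not_franklin_exceptional_iff assms by blast
  then show thesis
  proof cases
    case 1
    then show ?thesis using that[of S] assms by blast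
  next
    case 2
    then have c: "slope S < Min S" "2 * slope S < Max S" by simp_all
    have "Min (slope_to_base S) \<le> slope (slope_to_base S)"
      and "2 * Min (slope_to_base S) \<le> Max (slope_to_base S)"
      using Min_slope_to_base[OF assms(1-3) c] slope_le_slope_slope_to_base[OF assms(1-3) c]
        Max_slope_to_base[OF assms(1-3) c] c by linarith+
    moreover have "finite (slope_to_base S)" "0 \<notin> slope_to_base S"
      using finite_slope_to_base[OF assms(1)] zero_notin_slope_to_base[OF assms(1-3) c] .
    ultimately show ?thesis
      using that[of "slope_to_base S"] slope_to_base_nonempty
        base_to_slope_slope_to_base[OF assms(1-3) c] by simp
  qed
qed

definition partition_weight :: "nat set \<Rightarrow> int" where
  "partition_weight S = (-1) ^ num_parts S * int (largest_part S + num_parts S)"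

lemma partition_weight_neg:
  assumes "S \<noteq> {}" and "T \<noteq> {}" and "card T + 1 = card S" and "Max T = Max S + 1"
  shows "partition_weight T = - partition_weight S"
proof -
  have "largest_part T + num_parts T = largest_part S + num_parts S"
    using assms by (simp add: largest_part_def num_parts_def)
  moreover have "num_parts S = Suc (num_parts T)" using assms(3) by (simp add: num_parts_def)
  ultimately show ?thesis by (simp add: partition_weight_def)
qed

lemma member_distinct_partitions_of:
  "S \<in> distinct_partitions_of N \<longleftrightarrow> finite S \<and> 0 \<notin> S \<and> \<Sum>S = N"
  by (simp add: distinct_partitions_of_def distinct_partition_def part_sum_def)

lemma franklin_involution:
  assumes "S \<in> distinct_partitions_of N" and "S \<noteq> {}" and "\<not> franklin_exceptional S"
  shows "franklin S \<in> distinct_partitions_of N" and "franklin S \<noteq> {}"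
    and "\<not> franklin_exceptional (franklin S)" and "franklin (franklin S) = S"
    and "partition_weight (franklin S) = - partition_weight S" and "franklin S \<noteq> S"
proof -
  have S: "finite S" "0 \<notin> S" "\<Sum>S = N" using assms(1) by (simp_all add: member_distinct_partitions_of)
  obtain A where A: "finite A" "A \<noteq> {}" "0 \<notin> A" "Min A \<le> slope A" "2 * Min A \<le> Max A"
    and "S = A \<or> S = base_to_slope A"
    by (rule not_franklin_exceptional_cases[OF S(1) assms(2) S(2) assms(3)])
  have B: "finite (base_to_slope A)" "base_to_slope A \<noteq> {}" "0 \<notin> base_to_slope A"
    "\<Sum>(base_to_slope A) = \<Sum>A"
    using A finite_base_to_slope base_to_slope_nonempty zero_notin_base_to_slope sum_base_to_slope
    by blast+
  have "partition_weight (base_to_slope A) = - partition_weight A"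
    using partition_weight_neg A(2) B(2) card_base_to_slope[OF A] Max_base_to_slope[OF A] .
  moreover have "base_to_slope A \<noteq> A" using card_base_to_slope[OF A] by auto
  moreover have "\<Sum>A = N" using \<open>S = A \<or> S = base_to_slope A\<close> S B by auto
  ultimately show "franklin S \<in> distinct_partitions_of N" "franklin S \<noteq> {}"
    "\<not> franklin_exceptional (franklin S)" "franklin (franklin S) = S"
    "partition_weight (franklin S) = - partition_weight S" "franklin S \<noteq> S"
    using \<open>S = A \<or> S = base_to_slope A\<close> A B franklin_base_to_slope[OF A]
    by (auto simp: member_distinct_partitions_of)
qed

lemma sum_partition_weight_not_exceptional:
  "(\<Sum>S\<in>{S \<in> distinct_partitions_of N. S \<noteq> {} \<and> \<not> franklin_exceptional S}. partition_weight S) = 0"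
  by (rule sum_involution_eq_0[where h = franklin]) (auto dest: franklin_involution)

lemma interval_partition:
  assumes "1 \<le> k" and "1 \<le> r"
  defines "I \<equiv> {k..<k + r}"
  shows "finite I" and "I \<noteq> {}" and "0 \<notin> I" and "card I = r"
    and "Min I = k" and "Max I = k + r - 1" and "slope I = r"
    and "partition_weight I = (-1) ^ r * int (k + 2 * r - 1)"
proof -
  show "finite I" "I \<noteq> {}" "0 \<notin> I" "card I = r" using assms by (auto simp: I_def)
  show "Min I = k" using assms unfolding I_def by (intro Min_eqI) auto
  show Max_I: "Max I = k + r - 1" using assms unfolding I_def by (intro Max_eqI) auto
  show "slope I = r"
    by (rule slope_eqI; unfold Max_I; use assms in \<open>auto simp: I_def\<close>)
  show "partition_weight I = (-1) ^ r * int (k + 2 * r - 1)"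
    using assms(1,2) \<open>card I = r\<close> \<open>I \<noteq> {}\<close>
    by (simp add: partition_weight_def num_parts_def largest_part_def Max_I)
qed

definition pentagonal_minus :: "nat \<Rightarrow> nat set" where
  "pentagonal_minus r = {r..<r + r}"

definition pentagonal_plus :: "nat \<Rightarrow> nat set" where
  "pentagonal_plus r = {r + 1..<(r + 1) + r}"

lemma card_pentagonal_minus [simp]: "card (pentagonal_minus r) = r"
  by (simp add: pentagonal_minus_def)

lemma card_pentagonal_plus [simp]: "card (pentagonal_plus r) = r"
  by (simp add: pentagonal_plus_def)

lemma franklin_exceptional_iff_pentagonal:
  assumes "finite S" and "S \<noteq> {}" and "0 \<notin> S"
  shows "franklin_exceptional S \<longleftrightarrow> (\<exists>r\<ge>1. S = pentagonal_minus r \<or> S = pentagonal_plus r)"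
proof
  define s \<sigma> where "s = Min S" and "\<sigma> = slope S"
  assume "franklin_exceptional S"
  then have top: "Max S + 1 = s + \<sigma>" and base: "s = \<sigma> \<or> s = \<sigma> + 1"
    by (auto simp: franklin_exceptional_def s_def \<sigma>_def)
  have "S = {s..<s + \<sigma>}"
  proof (intro equalityI subsetI)
    fix x assume "x \<in> S"
    then have "s \<le> x" "x \<le> Max S" using assms by (simp_all add: s_def)
    then show "x \<in> {s..<s + \<sigma>}" using top by simp
  next
    fix x assume x: "x \<in> {s..<s + \<sigma>}"
    then have "Max S - (Max S - x) \<in> S" using top by (intro slope_run) (auto simp: \<sigma>_def)
    then show "x \<in> S" using x top by simp
  qed
  with base have "S = pentagonal_minus \<sigma> \<or> S = pentagonal_plus \<sigma>"
    by (auto simp: pentagonal_minus_def pentagonal_plus_def)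
  moreover have "1 \<le> \<sigma>" using slope_pos[OF assms] by (simp add: \<sigma>_def)
  ultimately show "\<exists>r\<ge>1. S = pentagonal_minus r \<or> S = pentagonal_plus r" by blast
next
  assume "\<exists>r\<ge>1. S = pentagonal_minus r \<or> S = pentagonal_plus r"
  then obtain r where "1 \<le> r" and "S = {r..<r + r} \<or> S = {r + 1..<(r + 1) + r}"
    unfolding pentagonal_minus_def pentagonal_plus_def by blast
  then consider "1 \<le> r" "S = {r..<r + r}" | "1 \<le> r" "S = {r + 1..<(r + 1) + r}" by blast
  then show "franklin_exceptional S"
  proof cases
    case 1
    note I = interval_partition[OF \<open>1 \<le> r\<close> \<open>1 \<le> r\<close>, folded \<open>S = {r..<r + r}\<close>]
    show ?thesis unfolding franklin_exceptional_def I(5-7) using \<open>1 \<le> r\<close> by simp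
  next
    case 2
    note I = interval_partition[of "r + 1" r, OF le_add2 \<open>1 \<le> r\<close>, folded \<open>S = {r + 1..<(r + 1) + r}\<close>]
    show ?thesis unfolding franklin_exceptional_def I(5-7) using \<open>1 \<le> r\<close> by simp
  qed
qed

lemma pentagonal_minus_partition:
  assumes "1 \<le> r"
  shows "finite (pentagonal_minus r)" and "pentagonal_minus r \<noteq> {}" and "0 \<notin> pentagonal_minus r"
    and "franklin_exceptional (pentagonal_minus r)" and "r \<in> pentagonal_minus r"
    and "\<Sum>(pentagonal_minus r) = r * (3 * r - 1) div 2"
    and "partition_weight (pentagonal_minus r) = (-1) ^ r * int (3 * r - 1)"
proof -
  note I = interval_partition[OF assms assms, folded pentagonal_minus_def]
  show "finite (pentagonal_minus r)" "pentagonal_minus r \<noteq> {}" "0 \<notin> pentagonal_minus r"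
    using I by simp_all
  then show "franklin_exceptional (pentagonal_minus r)"
    using franklin_exceptional_iff_pentagonal assms by blast
  show "r \<in> pentagonal_minus r" using assms by (simp add: pentagonal_minus_def)
  have "2 * \<Sum>(pentagonal_minus r) + r = r * (3 * r)"
    using double_sum_atLeastLessThan[of r r] by (simp add: pentagonal_minus_def)
  then show "\<Sum>(pentagonal_minus r) = r * (3 * r - 1) div 2" by (simp add: diff_mult_distrib2)
  show "partition_weight (pentagonal_minus r) = (-1) ^ r * int (3 * r - 1)"
    using I(8) by simp
qed

lemma pentagonal_plus_partition:
  assumes "1 \<le> r"
  shows "finite (pentagonal_plus r)" and "pentagonal_plus r \<noteq> {}" and "0 \<notin> pentagonal_plus r"
    and "franklin_exceptional (pentagonal_plus r)" and "r + 1 \<in> pentagonal_plus r"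
    and "\<Sum>(pentagonal_plus r) = r * (3 * r + 1) div 2"
    and "partition_weight (pentagonal_plus r) = (-1) ^ r * int (3 * r)"
proof -
  note I = interval_partition[of "r + 1" r, OF le_add2 assms, folded pentagonal_plus_def]
  show "finite (pentagonal_plus r)" "pentagonal_plus r \<noteq> {}" "0 \<notin> pentagonal_plus r"
    using I by simp_all
  then show "franklin_exceptional (pentagonal_plus r)"
    using franklin_exceptional_iff_pentagonal assms by blast
  show "r + 1 \<in> pentagonal_plus r" using assms by (simp add: pentagonal_plus_def)
  have "2 * \<Sum>(pentagonal_plus r) + r = r * (3 * r + 2)"
    using double_sum_atLeastLessThan[of "r + 1" r] by (simp add: pentagonal_plus_def)
  then show "\<Sum>(pentagonal_plus r) = r * (3 * r + 1) div 2" by (simp add: algebra_simps)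
  show "partition_weight (pentagonal_plus r) = (-1) ^ r * int (3 * r)"
    using I(8) by simp
qed

lemma finite_distinct_partitions_of: "finite (distinct_partitions_of N)"
proof (rule finite_subset)
  show "distinct_partitions_of N \<subseteq> Pow {..N}"
    by (auto simp: member_distinct_partitions_of intro: member_le_sum[of _ _ "\<lambda>x. x", simplified])
qed simp

lemma exceptional_distinct_partitions_eq:
  "{S \<in> distinct_partitions_of N. S \<noteq> {} \<and> franklin_exceptional S} =
     pentagonal_minus ` {r \<in> {1..N}. N = r * (3 * r - 1) div 2} \<union>
     pentagonal_plus ` {r \<in> {1..N}. N = r * (3 * r + 1) div 2}"
proof (intro equalityI subsetI)
  fix S assume "S \<in> {S \<in> distinct_partitions_of N. S \<noteq> {} \<and> franklin_exceptional S}"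
  then have S: "finite S" "S \<noteq> {}" "0 \<notin> S" "\<Sum>S = N" "franklin_exceptional S"
    by (auto simp: member_distinct_partitions_of)
  then obtain r where "1 \<le> r" and "S = pentagonal_minus r \<or> S = pentagonal_plus r"
    using franklin_exceptional_iff_pentagonal by blast
  moreover have "x \<le> N" if "x \<in> S" for x
    using S that member_le_sum[of x S "\<lambda>x. x"] by simp
  ultimately show "S \<in> pentagonal_minus ` {r \<in> {1..N}. N = r * (3 * r - 1) div 2} \<union>
      pentagonal_plus ` {r \<in> {1..N}. N = r * (3 * r + 1) div 2}"
    using pentagonal_minus_partition[of r] pentagonal_plus_partition[of r] S(4) by fastforce
next
  fix S assume "S \<in> pentagonal_minus ` {r \<in> {1..N}. N = r * (3 * r - 1) div 2} \<union>
      pentagonal_plus ` {r \<in> {1..N}. N = r * (3 * r + 1) div 2}"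
  then show "S \<in> {S \<in> distinct_partitions_of N. S \<noteq> {} \<and> franklin_exceptional S}"
    using pentagonal_minus_partition pentagonal_plus_partition by (auto simp: member_distinct_partitions_of)
qed

lemma sum_partition_weight_exceptional:
  "(\<Sum>S\<in>{S \<in> distinct_partitions_of N. S \<noteq> {} \<and> franklin_exceptional S}. partition_weight S) =
   (\<Sum>r\<in>{1..N}. (-1) ^ r * ((if N = r * (3 * r - 1) div 2 then int (3 * r - 1) else 0)
                          + (if N = r * (3 * r + 1) div 2 then int (3 * r) else 0)))"
proof -
  define A B where "A = {r \<in> {1..N}. N = r * (3 * r - 1) div 2}"
    and "B = {r \<in> {1..N}. N = r * (3 * r + 1) div 2}"
  have "inj pentagonal_minus" "inj pentagonal_plus"
    by (metis inj_onI card_pentagonal_minus, metis inj_onI card_pentagonal_plus)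
  moreover have "pentagonal_minus r \<noteq> pentagonal_plus r'" if "1 \<le> r" for r r'
  proof
    assume eq: "pentagonal_minus r = pentagonal_plus r'"
    then have "r = r'" by (metis card_pentagonal_minus card_pentagonal_plus)
    then show False using eq pentagonal_minus_partition(5)[OF that] by (simp add: pentagonal_plus_def)
  qed
  then have "pentagonal_minus ` A \<inter> pentagonal_plus ` B = {}" by (auto simp: A_def)
  ultimately have "(\<Sum>S\<in>pentagonal_minus ` A \<union> pentagonal_plus ` B. partition_weight S) =
      (\<Sum>r\<in>A. partition_weight (pentagonal_minus r)) + (\<Sum>r\<in>B. partition_weight (pentagonal_plus r))"
    by (simp add: A_def B_def sum.union_disjoint sum.reindex inj_on_subset)
  also have "\<dots> = (\<Sum>r\<in>A. (-1) ^ r * int (3 * r - 1)) + (\<Sum>r\<in>B. (-1) ^ r * int (3 * r))"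
    using pentagonal_minus_partition(7) pentagonal_plus_partition(7) by (simp add: A_def B_def)
  also have "\<dots> = (\<Sum>r\<in>{1..N}. if N = r * (3 * r - 1) div 2 then (-1) ^ r * int (3 * r - 1) else 0)
      + (\<Sum>r\<in>{1..N}. if N = r * (3 * r + 1) div 2 then (-1) ^ r * int (3 * r) else 0)"
    unfolding A_def B_def by (simp only: sum.inter_filter finite_atLeastAtMost)
  also have "\<dots> = (\<Sum>r\<in>{1..N}. (-1) ^ r * ((if N = r * (3 * r - 1) div 2 then int (3 * r - 1) else 0)
                          + (if N = r * (3 * r + 1) div 2 then int (3 * r) else 0)))"
    unfolding sum.distrib[symmetric] by (rule sum.cong) (simp_all add: distrib_left)
  finally show ?thesis unfolding exceptional_distinct_partitions_eq A_def B_def .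
qed

lemma sum_partition_weight_split:
  "(\<Sum>S\<in>distinct_partitions_of N. partition_weight S) =
     (\<Sum>S\<in>{S \<in> distinct_partitions_of N. S \<noteq> {} \<and> franklin_exceptional S}. partition_weight S) +
     (\<Sum>S\<in>{S \<in> distinct_partitions_of N. S \<noteq> {} \<and> \<not> franklin_exceptional S}. partition_weight S)"
proof -
  have "partition_weight {} = 0" by (simp add: partition_weight_def num_parts_def largest_part_def)
  then have "(\<Sum>S\<in>distinct_partitions_of N. partition_weight S) =
      (\<Sum>S\<in>{S \<in> distinct_partitions_of N. S \<noteq> {}}. partition_weight S)"
    by (intro sum.mono_neutral_right finite_distinct_partitions_of) auto
  also have "\<dots> = (\<Sum>S\<in>{S \<in> distinct_partitions_of N. S \<noteq> {} \<and> franklin_exceptional S}. partition_weight S) +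
     (\<Sum>S\<in>{S \<in> distinct_partitions_of N. S \<noteq> {} \<and> \<not> franklin_exceptional S}. partition_weight S)"
    by (subst sum.union_disjoint[symmetric]) (auto intro: finite_subset[OF _ finite_distinct_partitions_of] intro!: sum.cong)
  finally show ?thesis .
qed

theorem mainTheorem2:
  shows "Abs_fps (\<lambda>N. \<Sum>S\<in>distinct_partitions_of N.
            (-1) ^ num_parts S * int (largest_part S + num_parts S))
       = (Abs_fps (\<lambda>N. \<Sum>r\<in>{1..N}.
            (-1) ^ r * ((if N = r * (3 * r - 1) div 2 then int (3 * r - 1) else 0)
                      + (if N = r * (3 * r + 1) div 2 then int (3 * r) else 0))) :: int fps)"
  using sum_partition_weight_split sum_partition_weight_exceptional
    sum_partition_weight_not_exceptional
  by (simp add: partition_weight_def)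

end
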